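(* Let $n\ge 3$, $k\ge 3$, and let $\alpha=a_1a_2\cdots a_n\in\mathbf{A}_k(n)$. Let $j$ be the index of the last symbol of $\alpha$ different from $k-1$, and $\ell$ the index of the second-last symbol of $\alpha$ different from $k-1$. If (i) $a_n<k-1$, or (ii) $a_j<k-2$, or (iii) $a_1\cdots a_\ell$ is not a palindrome, then $\mathrm{LastNonMax}(\alpha)\in\mathbf{A}_k(n)$. Otherwise (i.e., $a_n=k-1$, $a_j=k-2$, and $a_1\cdots a_\ell$ is a palindrome), $\mathrm{LastNonMax}(\alpha)$ is a symmetric bracelet.
   Context: Let $\Sigma=\{0,1,\dots,k-1\}$. Strings are compared lexicographically ($\alpha<\beta$ if $\alpha$ is a proper prefix of $\beta$, or $\alpha$ has the smaller symbol at the first index where they differ). For $\alpha=a_1\cdots a_n$, $\alpha^R=a_n\cdots a_1$; $\alpha$ is a palindrome if $\alpha=\alpha^R$. $[\alpha]$ is the set of rotations of $\alpha$. $\alpha$ is a necklace if it is the lexicographically smallest element of $[\alpha]$; a bracelet if it is the lexicographically smallest element of $[\alpha]\cup[\alpha^R]$. A necklace $\alpha$ is symmetric if $\alpha^R\in[\alpha]$, asymmetric otherwise. $\mathbf{A}_k(n)$ is the set of asymmetric bracelets of length $n$ over $\Sigma$. For $\alpha\neq(k-1)^n$ with $j$ the index of its last symbol different from $k-1$, $\mathrm{LastNonMax}(\alpha)=a_1\cdots a_{j-1}(a_j+1)(k-1)^{n-j}$. *)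

theory Defs
  imports Main
begin

(* Strings over {0,...,k-1} are lists of naturals; positions are 1-based in the
   paper, so a_i = w ! (i - 1). *)

definition lex_less :: "nat list \<Rightarrow> nat list \<Rightarrow> bool" where
  "lex_less a b \<longleftrightarrow> (a, b) \<in> lexord {(x, y). x < y}"

definition lex_le :: "nat list \<Rightarrow> nat list \<Rightarrow> bool" where
  "lex_le a b \<longleftrightarrow> a = b \<or> lex_less a b"

definition rotations :: "nat list \<Rightarrow> nat list set" where
  "rotations w = {rotate i w | i. i < length w}"

definition is_palindrome :: "nat list \<Rightarrow> bool" where
  "is_palindrome w \<longleftrightarrow> w = rev w"

definition is_necklace :: "nat list \<Rightarrow> bool" where
  "is_necklace w \<longleftrightarrow> (\<forall>v \<in> rotations w. lex_le w v)"

definition is_bracelet :: "nat list \<Rightarrow> bool" where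
  "is_bracelet w \<longleftrightarrow> (\<forall>v \<in> rotations w \<union> rotations (rev w). lex_le w v)"

definition symmetric_necklace :: "nat list \<Rightarrow> bool" where
  "symmetric_necklace w \<longleftrightarrow> is_necklace w \<and> rev w \<in> rotations w"

definition asymmetric_necklace :: "nat list \<Rightarrow> bool" where
  "asymmetric_necklace w \<longleftrightarrow> is_necklace w \<and> rev w \<notin> rotations w"

definition asym_bracelets :: "nat \<Rightarrow> nat \<Rightarrow> nat list set" where
  "asym_bracelets k n = {w. length w = n \<and> set w \<subseteq> {0..<k} \<and>
                           is_bracelet w \<and> asymmetric_necklace w}"

definition symmetric_bracelet :: "nat list \<Rightarrow> bool" where
  "symmetric_bracelet w \<longleftrightarrow> is_bracelet w \<and> symmetric_necklace w"

definition last_nonmax_idx :: "nat \<Rightarrow> nat list \<Rightarrow> nat" where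
  "last_nonmax_idx k w = Max {i. 1 \<le> i \<and> i \<le> length w \<and> w ! (i - 1) \<noteq> k - 1}"

definition second_last_nonmax_idx :: "nat \<Rightarrow> nat list \<Rightarrow> nat" where
  "second_last_nonmax_idx k w =
     Max {i. 1 \<le> i \<and> i < last_nonmax_idx k w \<and> w ! (i - 1) \<noteq> k - 1}"

definition LastNonMax :: "nat \<Rightarrow> nat list \<Rightarrow> nat list" where
  "LastNonMax k w = (let j = last_nonmax_idx k w in
     take (j - 1) w @ [w ! (j - 1) + 1] @ replicate (length w - j) (k - 1))"

end

theory Submission
  imports Defs
begin

text \<open>
  \<open>\<beta> = LastNonMax(\<alpha>)\<close> is \<open>\<alpha>\<close> with \<open>a\<^sub>j\<close> raised by one.  The rotations of \<open>rev w\<close> are the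
  reflections \<open>w\<^sub>i = a\<^sub>i \<dots> a\<^sub>1 a\<^sub>n \<dots> a\<^sub>i\<^sub>+\<^sub>1\<close>, and \<open>w\<^sub>i = w\<close> exactly when \<open>a\<^sub>1 \<dots> a\<^sub>i\<close> and
  \<open>a\<^sub>i\<^sub>+\<^sub>1 \<dots> a\<^sub>n\<close> are both palindromes.  The bracelet \<open>\<alpha>\<close> is below all its rotations and
  reflections, strictly below the reflections since it is asymmetric.  Raising \<open>a\<^sub>j\<close>
  together with its copy in a rotation or reflection keeps this inequality whenever the copy
  lies at or before position \<open>j\<close>, and those starting after position \<open>j\<close> begin with a
  symbol larger than \<open>a\<^sub>1\<close>.  The remaining reflections agree with \<open>\<alpha>\<close> up to position \<open>j\<close>;
  for them \<open>\<beta> < \<beta>\<^sub>i\<close> unless \<open>a\<^sub>n = k-1\<close>, \<open>a\<^sub>j = k-2\<close>, \<open>i = \<ell>\<close> and \<open>a\<^sub>1 \<dots> a\<^sub>\<ell>\<close> is a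
  palindrome, and then \<open>\<beta>\<^sub>\<ell> = \<beta>\<close>.
\<close>

lemma lex_less_conv_nth:
  assumes "length x = length y"
  shows "lex_less x y \<longleftrightarrow> (\<exists>d<length x. (\<forall>t<d. x!t = y!t) \<and> x!d < y!d)"
proof -
  have "take i x = take i y \<longleftrightarrow> (\<forall>t<i. x!t = y!t)" if "i < length x" for i
    using that assms by (auto simp: list_eq_iff_nth_eq)
  then show ?thesis
    unfolding lex_less_def lexord_take_index_conv using assms by auto
qed

lemma lex_less_irrefl: "\<not> lex_less x x"
  unfolding lex_less_def by (rule lexord_irreflexive) auto

lemma lex_lessI:
  "length x = length y \<Longrightarrow> d < length x \<Longrightarrow> \<forall>t<d. x!t = y!t \<Longrightarrow> x!d < y!d \<Longrightarrow>
   lex_less x y"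
  by (subst lex_less_conv_nth) auto

lemma lex_le_imp_nth0_le:
  assumes "length x = length y" "0 < length x" "lex_le x y"
  shows "x!0 \<le> y!0"
proof (cases "x = y")
  case False
  then have "lex_less x y" using assms(3) lex_le_def by auto
  then obtain d where "d < length x" "\<forall>t<d. x!t = y!t" "x!d < y!d"
    using lex_less_conv_nth[OF assms(1)] by auto
  then show ?thesis by (cases d) auto
qed simp

lemma lex_less_list_update_Suc:
  assumes len: "length x = length y" and pq: "p \<le> q" "q < length x"
    and le: "lex_le x y" and strict: "lex_less x y \<or> p < q"
  shows "lex_less (x[q := x!q + 1]) (y[p := y!p + 1])"
proof (cases "lex_less x y")
  case False
  then have "x = y" "p < q" using le strict lex_le_def by auto
  then show ?thesis using pq by (subst lex_less_conv_nth) (auto intro!: exI[of _ p])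
next
  case True
  then obtain d where d: "d < length x" "\<forall>t<d. x!t = y!t" "x!d < y!d"
    using lex_less_conv_nth[OF len] by auto
  consider "d < p" | "p \<le> d" "p < q \<or> d = p" | "p = q" "p < d"
    using pq by linarith
  then show ?thesis
  proof cases
    case 1
    then show ?thesis using d pq len by (subst lex_less_conv_nth) (auto intro!: exI[of _ d])
  next
    case 2
    then have "x!p \<le> y!p" using d by (cases "d = p") auto
    then show ?thesis using d pq len 2
      by (subst lex_less_conv_nth) (auto simp: nth_list_update intro!: exI[of _ p])
  next
    case 3
    then show ?thesis using d pq len
      by (subst lex_less_conv_nth) (auto simp: nth_list_update intro!: exI[of _ d])
  qed
qed

lemma is_palindrome_iff_nth:
  "is_palindrome w \<longleftrightarrow> (\<forall>t<length w. w!t = w!(length w - 1 - t))"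
  unfolding is_palindrome_def list_eq_iff_nth_eq by (auto simp: rev_nth)

lemma rotate_in_rotations: "w \<noteq> [] \<Longrightarrow> rotate i w \<in> rotations w"
  unfolding rotations_def by (subst rotate_conv_mod) auto

definition reflect_at :: "nat \<Rightarrow> nat list \<Rightarrow> nat list" where
  "reflect_at i w = rev (take i w) @ rev (drop i w)"

lemma length_reflect_at [simp]: "length (reflect_at i w) = length w"
  by (simp add: reflect_at_def)

lemma nth_reflect_at:
  "i \<le> length w \<Longrightarrow> t < length w \<Longrightarrow>
   reflect_at i w ! t = (if t < i then w!(i-1-t) else w!(length w - 1 - (t - i)))"
  unfolding reflect_at_def by (auto simp: nth_append rev_nth min_def) (simp add: add.commute)

lemma reflect_at_eq_rotate_rev:
  "i \<le> length w \<Longrightarrow> reflect_at i w = rotate (length w - i) (rev w)"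
  using rotate_append[of "rev (drop i w)" "rev (take i w)"]
  by (metis reflect_at_def length_drop length_rev rev_append append_take_drop_id)

lemma rotations_rev_eq:
  "rotations (rev w) = {reflect_at i w | i. 1 \<le> i \<and> i \<le> length w}"
proof (intro equalityI subsetI)
  fix v assume "v \<in> rotations (rev w)"
  then obtain r where "r < length w" "v = rotate r (rev w)" by (auto simp: rotations_def)
  then show "v \<in> {reflect_at i w | i. 1 \<le> i \<and> i \<le> length w}"
    by (intro CollectI exI[of _ "length w - r"]) (auto simp: reflect_at_eq_rotate_rev)
next
  fix v assume "v \<in> {reflect_at i w | i. 1 \<le> i \<and> i \<le> length w}"
  then obtain i where "1 \<le> i" "i \<le> length w" "v = reflect_at i w" by blast
  then show "v \<in> rotations (rev w)" unfolding rotations_def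
    by (intro CollectI exI[of _ "length w - i"]) (auto simp: reflect_at_eq_rotate_rev)
qed

lemma reflect_at_eq_self_iff:
  "reflect_at i w = w \<longleftrightarrow> is_palindrome (take i w) \<and> is_palindrome (drop i w)"
proof -
  have "reflect_at i w = take i w @ drop i w \<longleftrightarrow>
        rev (take i w) = take i w \<and> rev (drop i w) = drop i w"
    unfolding reflect_at_def by (rule append_eq_append_conv) simp
  then show ?thesis by (auto simp: is_palindrome_def)
qed

lemma rev_in_rotations_iff:
  assumes "w \<noteq> []"
  shows "rev w \<in> rotations w \<longleftrightarrow> (\<exists>i. 1 \<le> i \<and> i \<le> length w \<and> reflect_at i w = w)"
proof
  assume "rev w \<in> rotations w"
  then obtain r where r: "r < length w" "rev w = rotate r w" by (auto simp: rotations_def)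
  define i where "i = (if r = 0 then length w else r)"
  have "reflect_at i w = rotate (length w - i) (rotate r w)"
    using r by (simp add: i_def reflect_at_eq_rotate_rev)
  also have "\<dots> = w" using r by (auto simp: i_def rotate_rotate)
  finally show "\<exists>i. 1 \<le> i \<and> i \<le> length w \<and> reflect_at i w = w"
    using r assms by (auto simp: i_def intro!: exI[of _ i])
next
  assume "\<exists>i. 1 \<le> i \<and> i \<le> length w \<and> reflect_at i w = w"
  then obtain i where i: "1 \<le> i" "i \<le> length w" "reflect_at i w = w" by blast
  then have "rotate i w = rotate i (rotate (length w - i) (rev w))"
    by (simp add: reflect_at_eq_rotate_rev)
  also have "\<dots> = rev w" using i by (simp add: rotate_rotate)
  finally show "rev w \<in> rotations w" using rotate_in_rotations[OF assms] by metis
qed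

lemma Max_last_index_eq_iff:
  fixes i\<^sub>0 m :: nat
  assumes "1 \<le> i\<^sub>0" "i\<^sub>0 \<le> m" "P (i\<^sub>0 - 1)"
  shows "Max {i. 1 \<le> i \<and> i \<le> m \<and> P (i - 1)} = i \<longleftrightarrow>
         1 \<le> i \<and> i \<le> m \<and> P (i - 1) \<and> (\<forall>s. i \<le> s \<longrightarrow> s < m \<longrightarrow> \<not> P s)"
proof -
  let ?S = "{i. 1 \<le> i \<and> i \<le> m \<and> P (i - 1)}"
  have "finite ?S" by (rule finite_subset[of _ "{..m}"]) auto
  moreover have "?S \<noteq> {}" using assms by auto
  moreover have "(\<forall>u\<in>?S. u \<le> i) \<longleftrightarrow> (\<forall>s. i \<le> s \<longrightarrow> s < m \<longrightarrow> \<not> P s)"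
  proof
    assume "\<forall>u\<in>?S. u \<le> i"
    then show "\<forall>s. i \<le> s \<longrightarrow> s < m \<longrightarrow> \<not> P s"
      by (metis (no_types, lifting) Suc_le_eq diff_Suc_1 le_add1 mem_Collect_eq not_less_eq_eq plus_1_eq_Suc)
  next
    assume H: "\<forall>s. i \<le> s \<longrightarrow> s < m \<longrightarrow> \<not> P s"
    show "\<forall>u\<in>?S. u \<le> i"
    proof
      fix u assume u: "u \<in> ?S"
      show "u \<le> i"
      proof (rule ccontr)
        assume "\<not> u \<le> i"
        then have "i \<le> u - 1" "u - 1 < m" using u by auto
        then show False using H u by auto
      qed
    qed
  qed
  ultimately show ?thesis by (simp add: Max_eq_iff)
qed

locale asym_bracelet =
  fixes k n :: nat and a :: "nat list"
  assumes n_pos: "0 < n" and a_in: "a \<in> asym_bracelets k n"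
begin

definition "K = k - 1"

text \<open>\<open>J\<close> and \<open>l\<close> are the 0-based position of \<open>a\<^sub>j\<close> and the 1-based index \<open>\<ell>\<close>.\<close>
definition "J = last_nonmax_idx k a - 1"
definition "l = second_last_nonmax_idx k a"
definition "b = a[J := a!J + 1]"

lemma length_a: "length a = n"
  using a_in by (simp add: asym_bracelets_def)

lemma nth_a_less: "t < n \<Longrightarrow> a!t < k"
  using a_in length_a by (auto simp: asym_bracelets_def dest!: nth_mem)

lemma a_nonempty: "a \<noteq> []"
  using length_a n_pos by auto

lemma a_le_rotate: "lex_le a (rotate r a)"
  using a_in rotate_in_rotations[OF a_nonempty]
  by (auto simp: asym_bracelets_def asymmetric_necklace_def is_necklace_def)

lemma reflect_at_a_neq: "1 \<le> i \<Longrightarrow> i \<le> n \<Longrightarrow> reflect_at i a \<noteq> a"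
  using a_in rev_in_rotations_iff[OF a_nonempty] length_a
  by (auto simp: asym_bracelets_def asymmetric_necklace_def)

lemma a_lex_less_reflect_at:
  assumes "1 \<le> i" "i \<le> n"
  shows "lex_less a (reflect_at i a)"
proof -
  have "reflect_at i a \<in> rotations (rev a)"
    using assms length_a by (auto simp: rotations_rev_eq)
  then have "lex_le a (reflect_at i a)"
    using a_in by (auto simp: asym_bracelets_def is_bracelet_def)
  then show ?thesis using reflect_at_a_neq[OF assms] lex_le_def by auto
qed

lemma exists_nonmax: "\<exists>t<n. a!t \<noteq> K"
proof (rule ccontr)
  assume "\<not> ?thesis"
  then have "rev a = a" using length_a by (intro nth_equalityI) (auto simp: rev_nth)
  then have "reflect_at n a = a" using length_a by (simp add: reflect_at_def)
  then show False using reflect_at_a_neq n_pos by simp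
qed

lemma last_nonmax_idx_eq_iff:
  "last_nonmax_idx k a = j \<longleftrightarrow> 1 \<le> j \<and> j \<le> n \<and> a!(j-1) \<noteq> K \<and> (\<forall>s. j \<le> s \<longrightarrow> s < n \<longrightarrow> a!s = K)"
proof -
  obtain t where "t < n" "a!t \<noteq> K" using exists_nonmax by blast
  then show ?thesis
    unfolding last_nonmax_idx_def length_a K_def
    using Max_last_index_eq_iff[of "Suc t" n "\<lambda>s. a!s \<noteq> k - 1"] by simp
qed

lemma
  shows J_less: "J < n" and nth_J_less: "a!J < K"
    and nth_after_J: "J < t \<Longrightarrow> t < n \<Longrightarrow> a!t = K"
    and last_nonmax_idx_eq: "last_nonmax_idx k a = Suc J"
proof -
  have *: "1 \<le> last_nonmax_idx k a" "last_nonmax_idx k a \<le> n" "a!J \<noteq> K"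
    "\<And>s. last_nonmax_idx k a \<le> s \<Longrightarrow> s < n \<Longrightarrow> a!s = K"
    using last_nonmax_idx_eq_iff[of "last_nonmax_idx k a"] by (simp_all add: J_def)
  then show "J < n" "last_nonmax_idx k a = Suc J" by (auto simp: J_def)
  show "a!J < K" using *(3) nth_a_less[OF \<open>J < n\<close>] by (auto simp: K_def)
  show "J < t \<Longrightarrow> t < n \<Longrightarrow> a!t = K" using *(4) by (simp add: J_def)
qed

lemma nth_0_le_nth_J: "a!0 \<le> a!J"
proof -
  have "a!0 \<le> rotate J a ! 0"
    using lex_le_imp_nth0_le[of a "rotate J a"] a_le_rotate length_a n_pos by simp
  then show ?thesis using J_less length_a by (simp add: nth_rotate)
qed

lemma nth_0_less: "a!0 < K"
  using nth_0_le_nth_J nth_J_less by simp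

text \<open>If \<open>j = 1\<close>, then \<open>\<alpha> = a\<^sub>1 (k-1)\<^sup>n\<^sup>-\<^sup>1\<close> would be symmetric.\<close>
lemma J_pos: "0 < J"
proof (rule ccontr)
  assume "\<not> 0 < J"
  then have "drop 1 a = replicate (n - 1) K"
    using length_a nth_after_J by (intro nth_equalityI) auto
  moreover have "is_palindrome (take 1 a)"
    using a_nonempty by (cases a) (simp_all add: is_palindrome_def)
  ultimately have "reflect_at 1 a = a"
    by (simp add: reflect_at_eq_self_iff is_palindrome_def)
  then show False using reflect_at_a_neq n_pos by simp
qed

lemma second_last_nonmax_idx_eq_iff:
  "second_last_nonmax_idx k a = i \<longleftrightarrow>
   1 \<le> i \<and> i \<le> J \<and> a!(i-1) \<noteq> K \<and> (\<forall>s. i \<le> s \<longrightarrow> s < J \<longrightarrow> a!s = K)"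
proof -
  have "{i. 1 \<le> i \<and> i < last_nonmax_idx k a \<and> a!(i-1) \<noteq> k - 1} =
        {i. 1 \<le> i \<and> i \<le> J \<and> a!(i-1) \<noteq> k - 1}"
    by (auto simp: last_nonmax_idx_eq)
  then show ?thesis
    unfolding second_last_nonmax_idx_def K_def
    using Max_last_index_eq_iff[of 1 J "\<lambda>s. a!s \<noteq> k - 1"] J_pos nth_0_less
    by (simp add: K_def)
qed

lemma
  shows l_pos: "1 \<le> l" and l_le_J: "l \<le> J"
    and nth_between_l_J: "l \<le> s \<Longrightarrow> s < J \<Longrightarrow> a!s = K"
  using second_last_nonmax_idx_eq_iff[of l] by (simp_all add: l_def)

lemma eq_l_if_palindrome_prefix:
  assumes "1 \<le> i" "i \<le> J" "is_palindrome (take i a)"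
    and "\<And>s. i \<le> s \<Longrightarrow> s < J \<Longrightarrow> a!s = K"
  shows "i = l"
proof -
  have "length (take i a) = i" using assms(2) J_less length_a by simp
  then have "take i a ! (i - 1) = take i a ! 0"
    using assms(1) assms(3)[unfolded is_palindrome_iff_nth, rule_format, of "i - 1"] by simp
  then have "a!(i-1) \<noteq> K" using assms(1) nth_0_less by simp
  then have "second_last_nonmax_idx k a = i"
    using assms by (simp add: second_last_nonmax_idx_eq_iff)
  then show ?thesis by (simp add: l_def)
qed

lemma length_b: "length b = n"
  using length_a by (simp add: b_def)

lemma nth_b_J [simp]: "b!J = a!J + 1"
  using J_less length_a by (simp add: b_def)

lemma nth_b_neq [simp]: "t \<noteq> J \<Longrightarrow> b!t = a!t"
  by (simp add: b_def)

lemma LastNonMax_eq: "LastNonMax k a = b"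
proof -
  have "drop (Suc J) a = replicate (n - Suc J) (k - 1)"
    using length_a nth_after_J by (intro nth_equalityI) (auto simp: K_def)
  then show ?thesis
    unfolding LastNonMax_def b_def last_nonmax_idx_eq
    using upd_conv_take_nth_drop[of J a] J_less length_a by simp
qed

lemma set_b_subset: "set b \<subseteq> {0..<k}"
proof
  fix x assume "x \<in> set b"
  then obtain t where "t < n" "x = b!t" using length_b by (auto simp: in_set_conv_nth)
  then show "x \<in> {0..<k}" using nth_a_less nth_J_less by (cases "t = J") (auto simp: K_def)
qed

lemma nth_0_b: "b!0 = a!0"
  using J_pos by simp

text \<open>Rotations by \<open>r \<le> J\<close> carry the raised symbol to the earlier position \<open>J - r\<close>;
  later rotations start with \<open>k-1 > b\<^sub>1\<close>.\<close>
lemma b_le_rotate: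
  assumes r: "r < n"
  shows "lex_le b (rotate r b)"
proof -
  consider "r = 0" | "0 < r" "r \<le> J" | "J < r" by linarith
  then show ?thesis
  proof cases
    case 1
    then show ?thesis by (simp add: lex_le_def)
  next
    case 2
    have "rotate r b = (rotate r a)[J - r := rotate r a ! (J - r) + 1]"
    proof (rule nth_equalityI)
      fix t assume "t < length (rotate r b)"
      then have t: "t < n" using length_b by simp
      have "(r + t) mod n = J \<longleftrightarrow> t = J - r"
        using 2 J_less t r by (cases "r + t < n") (auto simp: le_mod_geq)
      moreover have "(r + (J - r)) mod n = J" using 2 J_less by simp
      ultimately show "rotate r b ! t = (rotate r a)[J - r := rotate r a ! (J - r) + 1] ! t"
        using t length_a length_b J_less 2
        by (cases "t = J - r") (auto simp: nth_rotate nth_list_update)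
    qed (simp add: length_a length_b)
    moreover have "lex_less b ((rotate r a)[J - r := rotate r a ! (J - r) + 1])"
      unfolding b_def
      using lex_less_list_update_Suc[of a "rotate r a" "J - r" J] a_le_rotate length_a J_less 2
      by simp
    ultimately show ?thesis by (simp add: lex_le_def)
  next
    case 3
    have "rotate r b ! 0 = K"
      using 3 r length_b nth_after_J by (simp add: nth_rotate)
    then have "lex_less b (rotate r b)"
      using nth_0_less nth_0_b lex_lessI[of b "rotate r b" 0] length_b n_pos by simp
    then show ?thesis by (simp add: lex_le_def)
  qed
qed

lemma b_necklace: "is_necklace b"
  unfolding is_necklace_def rotations_def using b_le_rotate length_b by auto

lemma b_lex_less_reflect_at_if_J_less:
  assumes "J < i" "i \<le> n"
  shows "lex_less b (reflect_at i b)"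
proof -
  have "reflect_at i b ! 0 = b!(i-1)" using assms length_b by (simp add: nth_reflect_at)
  moreover have "a!0 < b!(i-1)"
    using nth_after_J[of "i-1"] assms nth_0_less nth_0_le_nth_J nth_J_less
    by (cases "i - 1 = J") auto
  ultimately show ?thesis
    using nth_0_b lex_lessI[of b "reflect_at i b" 0] length_b n_pos by simp
qed

lemma reflect_at_b:
  assumes "1 \<le> i" "i \<le> J"
  defines "p \<equiv> i + (n - 1 - J)"
  shows "reflect_at i b = (reflect_at i a)[p := reflect_at i a ! p + 1]"
proof (rule nth_equalityI)
  have p: "p < n" "\<not> p < i" "n - 1 - (p - i) = J"
    using assms J_less by (auto simp: p_def)
  fix t assume "t < length (reflect_at i b)"
  then have t: "t < n" using length_b by simp
  show "reflect_at i b ! t = (reflect_at i a)[p := reflect_at i a ! p + 1] ! t"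
  proof (cases "t < i")
    case True
    then have "i - 1 - t \<noteq> J" "t \<noteq> p" using assms p by auto
    then show ?thesis using True t assms J_less length_a length_b
      by (simp add: nth_reflect_at)
  next
    case False
    then have "n - 1 - (t - i) = J \<longleftrightarrow> t = p" using t assms J_less by (auto simp: p_def)
    then show ?thesis using False t p assms J_less length_a length_b
      by (cases "t = p") (simp_all add: nth_reflect_at)
  qed
qed (simp add: length_a length_b)

lemma eq_l_if_agrees_with_reflect_at:
  assumes i: "1 \<le> i" "i \<le> J" and long_tail: "J < i + (n - 1 - J)"
    and agree: "\<And>t. t < J \<Longrightarrow> a!t = reflect_at i a ! t"
  shows "i = l" "is_palindrome (take i a)"
proof -
  have len: "length (take i a) = i" using i J_less length_a by simp
  show pal: "is_palindrome (take i a)"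
    unfolding is_palindrome_iff_nth len
  proof (intro allI impI)
    fix t assume t: "t < i"
    have "a!t = reflect_at i a ! t" using agree t i by simp
    also have "\<dots> = a!(i - 1 - t)" using t i J_less length_a by (simp add: nth_reflect_at)
    finally show "take i a ! t = take i a ! (i - 1 - t)" using t by simp
  qed
  have "a!s = K" if "i \<le> s" "s < J" for s
  proof -
    have "a!s = a!(n - 1 - (s - i))"
      using agree[of s] that i J_less length_a by (simp add: nth_reflect_at)
    then show ?thesis using nth_after_J[of "n - 1 - (s - i)"] that long_tail by simp
  qed
  then show "i = l" using eq_l_if_palindrome_prefix i pal by blast
qed

lemma b_lex_less_reflect_at_or_tie:
  assumes i: "1 \<le> i" "i \<le> n"
  shows "lex_less b (reflect_at i b) \<or>
         (i = l \<and> is_palindrome (take l a) \<and> a!J + 1 = K \<and> J < n - 1)"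
proof (cases "J < i")
  case True
  then show ?thesis using b_lex_less_reflect_at_if_J_less i by simp
next
  case i_le: False
  define p where "p = i + (n - 1 - J)"
  have eq: "reflect_at i b = (reflect_at i a)[p := reflect_at i a ! p + 1]"
    using reflect_at_b i_le i by (simp add: p_def)
  have less: "lex_less a (reflect_at i a)" using a_lex_less_reflect_at[OF i] .
  show ?thesis
  proof (cases "p \<le> J")
    case True
    then show ?thesis
      using lex_less_list_update_Suc[of a "reflect_at i a" p J] eq less J_less length_a
      by (simp add: lex_le_def b_def)
  next
    case p_gt: False
    have len: "length b = length (reflect_at i b)" by simp
    obtain d where d: "d < n" "\<forall>t<d. a!t = reflect_at i a ! t" "a!d < reflect_at i a ! d"
      using less length_a by (auto simp: lex_less_conv_nth)
    have b_eq: "b!t = a!t" "reflect_at i b ! t = reflect_at i a ! t" if "t < J" for t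
      using that p_gt eq by simp_all
    show ?thesis
    proof (cases "d < J")
      case True
      then have "lex_less b (reflect_at i b)"
        using d b_eq length_b by (intro lex_lessI[OF len, of d]) auto
      then show ?thesis ..
    next
      case False
      then have agree: "t < J \<Longrightarrow> a!t = reflect_at i a ! t" for t using d by auto
      have "J < n - 1 - (J - i)" "n - 1 - (J - i) < n" using p_gt i_le J_less by (auto simp: p_def)
      then have "reflect_at i a ! J = K"
        using nth_after_J i_le J_less length_a by (simp add: nth_reflect_at)
      then have ref_J: "reflect_at i b ! J = K" using eq p_gt by simp
      show ?thesis
      proof (cases "a!J + 1 = K")
        case False
        then have "lex_less b (reflect_at i b)"
          using agree b_eq ref_J nth_J_less length_b J_less
          by (intro lex_lessI[OF len, of J]) auto
        then show ?thesis ..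
      next
        case True
        then show ?thesis
          using eq_l_if_agrees_with_reflect_at[OF i(1) _ _ agree] p_gt i_le
          by (auto simp: p_def)
      qed
    qed
  qed
qed

lemma reflect_at_l_b:
  assumes "a!J + 1 = K" "is_palindrome (take l a)"
  shows "reflect_at l b = b"
proof -
  have "take l b = take l a" using l_le_J by (simp add: b_def)
  moreover have "drop l b = replicate (n - l) K"
  proof (rule nth_equalityI)
    fix t assume "t < length (drop l b)"
    then have "l + t < n" using length_b by simp
    then have "b!(l + t) = K"
      using assms(1) l_le_J nth_after_J nth_between_l_J by (cases "l + t" J rule: linorder_cases) auto
    then show "drop l b ! t = replicate (n - l) K ! t"
      using \<open>l + t < n\<close> length_b by simp
  qed (simp add: length_b)
  ultimately show ?thesis using assms(2) by (simp add: reflect_at_eq_self_iff is_palindrome_def)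
qed

lemma b_bracelet: "is_bracelet b"
proof -
  have "lex_le b (reflect_at i b)" if "1 \<le> i" "i \<le> n" for i
    using b_lex_less_reflect_at_or_tie[OF that] reflect_at_l_b by (auto simp: lex_le_def)
  then show ?thesis
    using b_necklace length_b by (auto simp: is_bracelet_def is_necklace_def rotations_rev_eq)
qed

lemma rev_b_in_rotations_iff:
  "rev b \<in> rotations b \<longleftrightarrow> J < n - 1 \<and> a!J + 1 = K \<and> is_palindrome (take l a)"
proof -
  have "b \<noteq> []" using length_b n_pos by auto
  moreover have "l \<le> n" using l_le_J J_less by simp
  ultimately show ?thesis
    using rev_in_rotations_iff[of b] b_lex_less_reflect_at_or_tie lex_less_irrefl
      reflect_at_l_b l_pos length_b by metis
qed

end

theorem mainTheorem5:
  fixes k n :: nat and \<alpha> :: "nat list"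
  assumes "n \<ge> 3" and "k \<ge> 3" and "\<alpha> \<in> asym_bracelets k n"
  defines "j \<equiv> last_nonmax_idx k \<alpha>" and "l \<equiv> second_last_nonmax_idx k \<alpha>"
  shows "((\<alpha> ! (n - 1) < k - 1 \<or> \<alpha> ! (j - 1) < k - 2 \<or> \<not> is_palindrome (take l \<alpha>))
           \<longrightarrow> LastNonMax k \<alpha> \<in> asym_bracelets k n)
       \<and> ((\<alpha> ! (n - 1) = k - 1 \<and> \<alpha> ! (j - 1) = k - 2 \<and> is_palindrome (take l \<alpha>))
           \<longrightarrow> symmetric_bracelet (LastNonMax k \<alpha>))"
proof -
  interpret B: asym_bracelet k n \<alpha> using assms by unfold_locales simp_all
  have "\<alpha> ! (n - 1) \<le> k - 1" "\<alpha> ! (n - 1) = k - 1 \<longleftrightarrow> B.J < n - 1"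
    using B.nth_a_less[of "n - 1"] B.nth_after_J[of "n - 1"] B.J_less B.nth_J_less assms(1)
    by (cases "B.J = n - 1"; auto simp: B.K_def)+
  moreover have "\<alpha> ! (j - 1) \<le> k - 2" "\<alpha> ! (j - 1) = k - 2 \<longleftrightarrow> \<alpha>!B.J + 1 = B.K"
    using B.nth_J_less assms(2) by (auto simp: j_def B.last_nonmax_idx_eq B.K_def)
  moreover have "l = B.l" by (simp add: l_def B.l_def)
  ultimately have "(\<alpha> ! (n - 1) = k - 1 \<and> \<alpha> ! (j - 1) = k - 2 \<and> is_palindrome (take l \<alpha>))
                   \<longleftrightarrow> rev B.b \<in> rotations B.b"
    using B.rev_b_in_rotations_iff by simp
  then show ?thesis
    using B.b_bracelet B.b_necklace B.length_b B.set_b_subset \<open>\<alpha> ! (n - 1) \<le> k - 1\<close>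
      \<open>\<alpha> ! (j - 1) \<le> k - 2\<close>
    by (auto simp: B.LastNonMax_eq asym_bracelets_def asymmetric_necklace_def
        symmetric_bracelet_def symmetric_necklace_def)
qed

end
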